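(* rATL* and ATL* are equally expressive: (i) for every rATL* formula $\varphi$ and every $t\in\mathbb{B}_4$ there is an ATL* formula $\varphi_t$ with $V(s,\varphi)\succeq t\iff\mathcal{S},s\models\varphi_t$ for all concurrent game structures $\mathcal{S}$ and states $s$; and (ii) for every ATL* formula $\psi$ there is an rATL* formula $\psi^\star$ with $\mathcal{S},s\models\psi\iff V(s,\psi^\star)=1111$ for all concurrent game structures $\mathcal{S}$ and states $s$.
   Context: Fix a finite set $\mathrm{AP}$ of atomic propositions. A concurrent game structure (CGS) is a tuple $\mathcal{S}=(St,Ag,Ac,\delta,\ell)$ where $St$ is a finite set of states, $Ag$ a finite set of agents, $Ac$ a finite set of actions, $\ell:St\to 2^{\mathrm{AP}}$ a labeling, and $\delta:St\times AV\to St$ a transition function, where $AV$ is the set of action vectors for $Ag$ (an action vector for $A\subseteq Ag$ is a map $A\to Ac$). A state $s'$ is a successor of $s$ if $s'=\delta(s,v)$ for some $v\in AV$. A path is an infinite sequence $\pi=s_0s_1s_2\cdots$ of states with $s_{n+1}$ a successor of $s_n$ for all $n$; write $\pi[n]=s_n$ and $\pi[i..]$ for the suffix $s_is_{i+1}\cdots$. A strategy for an agent is a function $f:St^+\to Ac$. For $A\subseteq Ag$ and a set $F_A=\{f_a\mid a\in A\}$ of strategies, one for each agent in $A$, $out(s,F_A)$ is the set of paths $s_0s_1\cdots$ with $s_0=s$ such that for every $n\ge 0$ there is $v\in AV$ with $v(a)=f_a(s_0\cdots s_n)$ for all $a\in A$ and $s_{n+1}=\delta(s_n,v)$. $\mathbb{B}_4=\{1111,0111,0011,0001,0000\}$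 is totally ordered by $1111\succ0111\succ0011\succ0001\succ0000$; for $b=b_1b_2b_3b_4\in\mathbb{B}_4$ and $k\in\{1,2,3,4\}$, $b[k]=b_k$; max and min on $\mathbb{B}_4$ refer to this order, and on bits to $0<1$. rATL* formulas: state formulas $\varphi::=p\mid\neg\varphi\mid\varphi\vee\varphi\mid\varphi\wedge\varphi\mid\varphi\to\varphi\mid\langle\!\langle A\rangle\!\rangle\Phi\mid[\![A]\!]\Phi$ and path formulas $\Phi::=\varphi\mid\neg\Phi\mid\Phi\vee\Phi\mid\Phi\wedge\Phi\mid\Phi\to\Phi\mid\dot\bigcirc\Phi\mid\dot\Diamond\Phi\mid\dot\Box\Phi$ ($p\in\mathrm{AP}$, $A$ a set of agents); an rATL* formula is a state formula. Valuation $V$ into $\mathbb{B}_4$: for state formulas, $V(s,p)=1111$ if $p\in\ell(s)$ else $0000$; $\vee,\wedge$ are max, min; $V(s,\neg\varphi)=0000$ if $V(s,\varphi)=1111$ else $1111$; $V(s,\varphi_1\to\varphi_2)=1111$ if $V(s,\varphi_1)\preceq V(s,\varphi_2)$ else $V(s,\varphi_2)$; $V(s,\langle\!\langle A\rangle\!\rangle\Phi)$ is the maximal $b$ such that there is a set $F_A$ of strategies (one per agent in $A$) with $V(\pi,\Phi)\succeq b$ for all $\pi\in out(s,F_A)$; $V(s,[\![A]\!]\Phi)$ is the maximal $b$ such that for every such $F_A$ some $\pi\in out(s,F_A)$ has $V(\pi,\Phi)\succeq b$. For path formulas: $V(\pi,\varphi)=V(\pi[0],\varphi)$ for state formulas $\varphi$;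 $\neg,\vee,\wedge,\to$ are as for state formulas (with $\pi$ in place of $s$); $V(\pi,\dot\bigcirc\Phi)[k]=V(\pi[1..],\Phi)[k]$; $V(\pi,\dot\Diamond\Phi)[k]=\max_{i\ge0}V(\pi[i..],\Phi)[k]$; $V(\pi,\dot\Box\Phi)=b_1b_2b_3b_4$ with $b_1=\min_{i\ge0}V(\pi[i..],\Phi)[1]$, $b_2=\max_{i\ge0}\min_{j\ge i}V(\pi[j..],\Phi)[2]$, $b_3=\min_{i\ge0}\max_{j\ge i}V(\pi[j..],\Phi)[3]$, $b_4=\max_{i\ge0}V(\pi[i..],\Phi)[4]$. ATL* is the standard logic of Alur, Henzinger and Kupferman with state formulas $\varphi::=p\mid\neg\varphi\mid\varphi\vee\varphi\mid\langle\!\langle A\rangle\!\rangle\Phi\mid[\![A]\!]\Phi$ (and derived connectives) and path formulas $\Phi::=\varphi\mid\neg\Phi\mid\Phi\vee\Phi\mid\bigcirc\Phi\mid\Diamond\Phi\mid\Box\Phi$ (and derived connectives), with Boolean satisfaction relation $\models$: $\mathcal{S},s\models\langle\!\langle A\rangle\!\rangle\Phi$ iff some $F_A$ has all $\pi\in out(s,F_A)$ satisfying $\Phi$; $\mathcal{S},s\models[\![A]\!]\Phi$ iff for every $F_A$ some $\pi\in out(s,F_A)$ satisfies $\Phi$; state formulas hold on a path iff they hold at its first state; $\bigcirc,\Diamond,\Box$ refer to the suffix $\pi[1..]$, some suffix, all suffixes respectively. *)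

theory Defs
  imports Main
begin

datatype B4 = B0000 | B0001 | B0011 | B0111 | B1111

fun rank :: "B4 \<Rightarrow> nat" where
  "rank B0000 = 0" | "rank B0001 = 1" | "rank B0011 = 2" | "rank B0111 = 3" | "rank B1111 = 4"

lemma rank_inj: "rank x = rank y \<Longrightarrow> x = y"
  by (cases x; cases y; simp)

instantiation B4 :: linorder
begin
definition less_eq_B4 :: "B4 \<Rightarrow> B4 \<Rightarrow> bool" where "less_eq_B4 x y \<longleftrightarrow> rank x \<le> rank y"
definition less_B4 :: "B4 \<Rightarrow> B4 \<Rightarrow> bool" where "less_B4 x y \<longleftrightarrow> rank x < rank y"
instance
  by standard (auto simp: less_eq_B4_def less_B4_def intro: rank_inj)
end

fun bit :: "B4 \<Rightarrow> nat \<Rightarrow> bool" where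
  "bit B0000 k = False"
| "bit B0001 k = (k = 4)"
| "bit B0011 k = (k = 3 \<or> k = 4)"
| "bit B0111 k = (k = 2 \<or> k = 3 \<or> k = 4)"
| "bit B1111 k = True"

text \<open>The element b1 b2 b3 b4 of B4 (the arguments are the four bits; on the monotone
  bit words, which are exactly the elements of B4, this is the identity on bit words).\<close>
definition mkB4 :: "bool \<Rightarrow> bool \<Rightarrow> bool \<Rightarrow> bool \<Rightarrow> B4" where
  "mkB4 b1 b2 b3 b4 =
     (if b1 then B1111 else if b2 then B0111 else if b3 then B0011 else if b4 then B0001 else B0000)"

text \<open>Agents: the whole (finite) type 'ag.  States and actions: finite sets of naturals.\<close>
record ('p, 'ag) cgs =
  St :: "nat set"
  Ac :: "nat set"
  delta :: "nat \<Rightarrow> ('ag \<Rightarrow> nat) \<Rightarrow> nat"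
  lab :: "nat \<Rightarrow> 'p set"

definition AV :: "('p, 'ag) cgs \<Rightarrow> ('ag \<Rightarrow> nat) set" where
  "AV S = {v. \<forall>a. v a \<in> Ac S}"

definition is_cgs :: "('p, 'ag) cgs \<Rightarrow> bool" where
  "is_cgs S \<longleftrightarrow> finite (St S) \<and> St S \<noteq> {} \<and> finite (Ac S) \<and> Ac S \<noteq> {}
     \<and> (\<forall>s \<in> St S. \<forall>v \<in> AV S. delta S s v \<in> St S)"

text \<open>A set F_A of strategies, one for each agent in A (given as a family indexed by agents;
  only the members for agents in A matter).\<close>
definition strategies :: "('p, 'ag) cgs \<Rightarrow> 'ag set \<Rightarrow> ('ag \<Rightarrow> nat list \<Rightarrow> nat) \<Rightarrow> bool" where
  "strategies S A F \<longleftrightarrow> (\<forall>a \<in> A. \<forall>h. F a h \<in> Ac S)"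

definition out :: "('p, 'ag) cgs \<Rightarrow> nat \<Rightarrow> 'ag set \<Rightarrow> ('ag \<Rightarrow> nat list \<Rightarrow> nat) \<Rightarrow> (nat \<Rightarrow> nat) set" where
  "out S s A F = {\<pi>. \<pi> 0 = s \<and>
     (\<forall>n. \<exists>v \<in> AV S. (\<forall>a \<in> A. v a = F a (map \<pi> [0..<Suc n])) \<and> \<pi> (Suc n) = delta S (\<pi> n) v)}"

definition suffix :: "nat \<Rightarrow> (nat \<Rightarrow> nat) \<Rightarrow> (nat \<Rightarrow> nat)" where
  "suffix i \<pi> = (\<lambda>n. \<pi> (n + i))"

datatype ('p, 'ag) rstate =
    RProp 'p
  | RNeg "('p, 'ag) rstate"
  | ROr "('p, 'ag) rstate" "('p, 'ag) rstate"
  | RAnd "('p, 'ag) rstate" "('p, 'ag) rstate"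
  | RImp "('p, 'ag) rstate" "('p, 'ag) rstate"
  | RExists "'ag set" "('p, 'ag) rpath"
  | RForall "'ag set" "('p, 'ag) rpath"
and ('p, 'ag) rpath =
    RState "('p, 'ag) rstate"
  | RPNeg "('p, 'ag) rpath"
  | RPOr "('p, 'ag) rpath" "('p, 'ag) rpath"
  | RPAnd "('p, 'ag) rpath" "('p, 'ag) rpath"
  | RPImp "('p, 'ag) rpath" "('p, 'ag) rpath"
  | RNext "('p, 'ag) rpath"
  | REv "('p, 'ag) rpath"
  | RAlw "('p, 'ag) rpath"

definition negB4 :: "B4 \<Rightarrow> B4" where
  "negB4 b = (if b = B1111 then B0000 else B1111)"

definition impB4 :: "B4 \<Rightarrow> B4 \<Rightarrow> B4" where
  "impB4 b1 b2 = (if b1 \<le> b2 then B1111 else b2)"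

primrec Vs :: "('p, 'ag) cgs \<Rightarrow> nat \<Rightarrow> ('p, 'ag) rstate \<Rightarrow> B4"
  and Vp :: "('p, 'ag) cgs \<Rightarrow> (nat \<Rightarrow> nat) \<Rightarrow> ('p, 'ag) rpath \<Rightarrow> B4" where
  "Vs S s (RProp p) = (if p \<in> lab S s then B1111 else B0000)"
| "Vs S s (RNeg \<phi>) = negB4 (Vs S s \<phi>)"
| "Vs S s (ROr \<phi> \<psi>) = max (Vs S s \<phi>) (Vs S s \<psi>)"
| "Vs S s (RAnd \<phi> \<psi>) = min (Vs S s \<phi>) (Vs S s \<psi>)"
| "Vs S s (RImp \<phi> \<psi>) = impB4 (Vs S s \<phi>) (Vs S s \<psi>)"
| "Vs S s (RExists A \<Phi>) =
     Max {b. \<exists>F. strategies S A F \<and> (\<forall>\<pi> \<in> out S s A F. b \<le> Vp S \<pi> \<Phi>)}"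
| "Vs S s (RForall A \<Phi>) =
     Max {b. \<forall>F. strategies S A F \<longrightarrow> (\<exists>\<pi> \<in> out S s A F. b \<le> Vp S \<pi> \<Phi>)}"
| "Vp S \<pi> (RState \<phi>) = Vs S (\<pi> 0) \<phi>"
| "Vp S \<pi> (RPNeg \<Phi>) = negB4 (Vp S \<pi> \<Phi>)"
| "Vp S \<pi> (RPOr \<Phi> \<Psi>) = max (Vp S \<pi> \<Phi>) (Vp S \<pi> \<Psi>)"
| "Vp S \<pi> (RPAnd \<Phi> \<Psi>) = min (Vp S \<pi> \<Phi>) (Vp S \<pi> \<Psi>)"
| "Vp S \<pi> (RPImp \<Phi> \<Psi>) = impB4 (Vp S \<pi> \<Phi>) (Vp S \<pi> \<Psi>)"
| "Vp S \<pi> (RNext \<Phi>) =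
     mkB4 (bit (Vp S (suffix 1 \<pi>) \<Phi>) 1) (bit (Vp S (suffix 1 \<pi>) \<Phi>) 2)
          (bit (Vp S (suffix 1 \<pi>) \<Phi>) 3) (bit (Vp S (suffix 1 \<pi>) \<Phi>) 4)"
| "Vp S \<pi> (REv \<Phi>) =
     mkB4 (\<exists>i. bit (Vp S (suffix i \<pi>) \<Phi>) 1) (\<exists>i. bit (Vp S (suffix i \<pi>) \<Phi>) 2)
          (\<exists>i. bit (Vp S (suffix i \<pi>) \<Phi>) 3) (\<exists>i. bit (Vp S (suffix i \<pi>) \<Phi>) 4)"
| "Vp S \<pi> (RAlw \<Phi>) =
     mkB4 (\<forall>i. bit (Vp S (suffix i \<pi>) \<Phi>) 1)
          (\<exists>i. \<forall>j\<ge>i. bit (Vp S (suffix j \<pi>) \<Phi>) 2)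
          (\<forall>i. \<exists>j\<ge>i. bit (Vp S (suffix j \<pi>) \<Phi>) 3)
          (\<exists>i. bit (Vp S (suffix i \<pi>) \<Phi>) 4)"

datatype ('p, 'ag) astate =
    AProp 'p
  | ANeg "('p, 'ag) astate"
  | AOr "('p, 'ag) astate" "('p, 'ag) astate"
  | AExists "'ag set" "('p, 'ag) apath"
  | AForall "'ag set" "('p, 'ag) apath"
and ('p, 'ag) apath =
    AState "('p, 'ag) astate"
  | APNeg "('p, 'ag) apath"
  | APOr "('p, 'ag) apath" "('p, 'ag) apath"
  | ANext "('p, 'ag) apath"
  | AEv "('p, 'ag) apath"
  | AAlw "('p, 'ag) apath"

primrec sat_s :: "('p, 'ag) cgs \<Rightarrow> nat \<Rightarrow> ('p, 'ag) astate \<Rightarrow> bool"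
  and sat_p :: "('p, 'ag) cgs \<Rightarrow> (nat \<Rightarrow> nat) \<Rightarrow> ('p, 'ag) apath \<Rightarrow> bool" where
  "sat_s S s (AProp p) = (p \<in> lab S s)"
| "sat_s S s (ANeg \<phi>) = (\<not> sat_s S s \<phi>)"
| "sat_s S s (AOr \<phi> \<psi>) = (sat_s S s \<phi> \<or> sat_s S s \<psi>)"
| "sat_s S s (AExists A \<Phi>) = (\<exists>F. strategies S A F \<and> (\<forall>\<pi> \<in> out S s A F. sat_p S \<pi> \<Phi>))"
| "sat_s S s (AForall A \<Phi>) = (\<forall>F. strategies S A F \<longrightarrow> (\<exists>\<pi> \<in> out S s A F. sat_p S \<pi> \<Phi>))"
| "sat_p S \<pi> (AState \<phi>) = sat_s S (\<pi> 0) \<phi>"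
| "sat_p S \<pi> (APNeg \<Phi>) = (\<not> sat_p S \<pi> \<Phi>)"
| "sat_p S \<pi> (APOr \<Phi> \<Psi>) = (sat_p S \<pi> \<Phi> \<or> sat_p S \<pi> \<Psi>)"
| "sat_p S \<pi> (ANext \<Phi>) = sat_p S (suffix 1 \<pi>) \<Phi>"
| "sat_p S \<pi> (AEv \<Phi>) = (\<exists>i. sat_p S (suffix i \<pi>) \<Phi>)"
| "sat_p S \<pi> (AAlw \<Phi>) = (\<forall>i. sat_p S (suffix i \<pi>) \<Phi>)"

end

theory Submission
  imports Defs
begin

text \<open>A value of \<open>B4\<close> is determined by its four bits, and every rATL* operator acts on bits
  as a Boolean ATL* operator: \<open>\<not>\<close> reads bit 1, \<open>\<or>\<close>, \<open>\<and>\<close>, \<open>\<bigcirc>\<close>, \<open>\<diamond>\<close> act bitwise, \<open>\<rightarrow>\<close>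
  compares all four bits, and \<open>\<box>\<close> acts on bits 1 to 4 as \<open>\<box>\<close>, \<open>\<diamond>\<box>\<close>, \<open>\<box>\<diamond>\<close>, \<open>\<diamond>\<close>.
  The strategic quantifiers commute with taking a bit, because bit \<open>k\<close> of the maximum of a
  downward closed set holds iff the set contains the least value with bit \<open>k\<close>.  Hence bit \<open>k\<close>
  of every rATL* formula is expressed by an ATL* formula, and \<open>t \<preceq> V(s,\<phi>)\<close> is one of these
  bits (or trivial for \<open>t = 0000\<close>).  Conversely, reading every ATL* formula as an rATL*
  formula, the first bit of its value is its Boolean truth value.\<close>

lemma UNIV_B4: "(UNIV :: B4 set) = {B0000, B0001, B0011, B0111, B1111}"
  using B4.exhaust by auto

instance B4 :: finite
  by standard (simp add: UNIV_B4)

definition bit_threshold :: "nat \<Rightarrow> B4" where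
  "bit_threshold k = (if k = 1 then B1111 else if k = 2 then B0111 else if k = 3 then B0011 else B0001)"

lemma bit_iff_threshold_le: "k \<in> {1,2,3,4} \<Longrightarrow> bit b k \<longleftrightarrow> bit_threshold k \<le> b"
  by (cases b) (auto simp: bit_threshold_def less_eq_B4_def)

lemma bit_mono: "bit b 1 \<Longrightarrow> bit b 2" "bit b 2 \<Longrightarrow> bit b 3" "bit b 3 \<Longrightarrow> bit b 4"
  by (cases b; simp)+

lemma less_eq_B4_iff_bits:
  "a \<le> b \<longleftrightarrow> (bit a 1 \<longrightarrow> bit b 1) \<and> (bit a 2 \<longrightarrow> bit b 2) \<and> (bit a 3 \<longrightarrow> bit b 3) \<and> (bit a 4 \<longrightarrow> bit b 4)"
  by (cases a; cases b; simp add: less_eq_B4_def)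

lemma bit_1_iff: "bit b 1 \<longleftrightarrow> b = B1111"
  by (cases b) auto

lemma bit_negB4: "k \<in> {1,2,3,4} \<Longrightarrow> bit (negB4 b) k \<longleftrightarrow> \<not> bit b 1"
  by (cases b) (auto simp: negB4_def)

lemma bit_max: "k \<in> {1,2,3,4} \<Longrightarrow> bit (max a b) k \<longleftrightarrow> bit a k \<or> bit b k"
  by (simp add: bit_iff_threshold_le le_max_iff_disj)

lemma bit_min: "k \<in> {1,2,3,4} \<Longrightarrow> bit (min a b) k \<longleftrightarrow> bit a k \<and> bit b k"
  by (simp add: bit_iff_threshold_le)

lemma bit_impB4: "k \<in> {1,2,3,4} \<Longrightarrow> bit (impB4 a b) k \<longleftrightarrow>
   (bit a 1 \<longrightarrow> bit b 1) \<and> (bit a 2 \<longrightarrow> bit b 2) \<and> (bit a 3 \<longrightarrow> bit b 3) \<and> (bit a 4 \<longrightarrow> bit b 4) \<or> bit b k"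
  unfolding impB4_def less_eq_B4_iff_bits[symmetric] by auto

lemma bit_mkB4:
  assumes "b1 \<longrightarrow> b2" "b2 \<longrightarrow> b3" "b3 \<longrightarrow> b4" "k \<in> {1,2,3,4}"
  shows "bit (mkB4 b1 b2 b3 b4) k \<longleftrightarrow> (if k = 1 then b1 else if k = 2 then b2 else if k = 3 then b3 else b4)"
  using assms unfolding mkB4_def by auto

lemma bit_Max_down_closed:
  assumes "X \<noteq> {}" "\<And>b c. b \<in> X \<Longrightarrow> c \<le> b \<Longrightarrow> c \<in> X" "k \<in> {1,2,3,4}"
  shows "bit (Max X) k \<longleftrightarrow> bit_threshold k \<in> X"
proof -
  have "bit (Max X) k \<longleftrightarrow> bit_threshold k \<le> Max X" using bit_iff_threshold_le[OF assms(3)] .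
  also have "\<dots> \<longleftrightarrow> (\<exists>b\<in>X. bit_threshold k \<le> b)" using assms(1) by (simp add: Max_ge_iff)
  also have "\<dots> \<longleftrightarrow> bit_threshold k \<in> X" using assms(2) by auto
  finally show ?thesis .
qed

lemma suffix_suffix [simp]: "suffix j (suffix i \<pi>) = suffix (i + j) \<pi>"
  by (simp add: suffix_def add_ac)

lemma out_nonempty:
  assumes "Ac S \<noteq> {}" "strategies S A F"
  shows "out S s A F \<noteq> {}"
proof -
  obtain c where c: "c \<in> Ac S" using assms(1) by blast
  define vec where "vec h = (\<lambda>a. if a \<in> A then F a h else c)" for h
  have vec_AV: "vec h \<in> AV S" for h
    using c assms(2) by (auto simp: vec_def AV_def strategies_def)
  define hist where "hist = rec_nat [s] (\<lambda>n h. h @ [delta S (last h) (vec h)])"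
  define \<pi> where "\<pi> n = last (hist n)" for n
  have hist_Suc: "hist (Suc n) = hist n @ [delta S (\<pi> n) (vec (hist n))]" for n
    by (simp add: hist_def \<pi>_def)
  have hist_eq: "hist n = map \<pi> [0..<Suc n]" for n
  proof (induction n)
    case 0
    show ?case by (simp add: hist_def \<pi>_def)
  next
    case (Suc n)
    have "\<pi> (Suc n) = delta S (\<pi> n) (vec (hist n))" by (simp add: \<pi>_def hist_Suc)
    then show ?case using Suc by (simp add: hist_Suc)
  qed
  have "\<pi> \<in> out S s A F"
    unfolding out_def
  proof (intro CollectI conjI allI)
    show "\<pi> 0 = s" by (simp add: \<pi>_def hist_def)
    fix n
    show "\<exists>v\<in>AV S. (\<forall>a\<in>A. v a = F a (map \<pi> [0..<Suc n])) \<and> \<pi> (Suc n) = delta S (\<pi> n) v"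
      using vec_AV[of "hist n"]
      by (intro bexI[of _ "vec (hist n)"]) (simp_all add: vec_def \<pi>_def hist_Suc hist_eq[symmetric] del: upt_Suc)
  qed
  then show ?thesis by blast
qed

lemma bit_Vs_RExists:
  assumes "Ac S \<noteq> {}" "k \<in> {1,2,3,4}"
  shows "bit (Vs S s (RExists A \<Phi>)) k \<longleftrightarrow>
    (\<exists>F. strategies S A F \<and> (\<forall>\<pi> \<in> out S s A F. bit (Vp S \<pi> \<Phi>) k))"
proof -
  let ?X = "{b. \<exists>F. strategies S A F \<and> (\<forall>\<pi> \<in> out S s A F. b \<le> Vp S \<pi> \<Phi>)}"
  obtain c where "c \<in> Ac S" using assms(1) by blast
  then have "strategies S A (\<lambda>_ _. c)" by (simp add: strategies_def)
  then have "B0000 \<in> ?X" by (auto simp: less_eq_B4_def)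
  then have "bit (Max ?X) k \<longleftrightarrow> bit_threshold k \<in> ?X"
    by (intro bit_Max_down_closed assms(2)) (blast intro: order_trans)+
  then show ?thesis by (simp add: bit_iff_threshold_le[OF assms(2)])
qed

lemma bit_Vs_RForall:
  assumes "Ac S \<noteq> {}" "k \<in> {1,2,3,4}"
  shows "bit (Vs S s (RForall A \<Phi>)) k \<longleftrightarrow>
    (\<forall>F. strategies S A F \<longrightarrow> (\<exists>\<pi> \<in> out S s A F. bit (Vp S \<pi> \<Phi>) k))"
proof -
  let ?X = "{b. \<forall>F. strategies S A F \<longrightarrow> (\<exists>\<pi> \<in> out S s A F. b \<le> Vp S \<pi> \<Phi>)}"
  have "B0000 \<in> ?X" using out_nonempty[OF assms(1)] by (auto simp: less_eq_B4_def ex_in_conv[symmetric])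
  then have "bit (Max ?X) k \<longleftrightarrow> bit_threshold k \<in> ?X"
    by (intro bit_Max_down_closed assms(2)) (blast intro: order_trans)+
  then show ?thesis by (simp add: bit_iff_threshold_le[OF assms(2)])
qed

lemma bit_Vp_RNext:
  "k \<in> {1,2,3,4} \<Longrightarrow> bit (Vp S \<pi> (RNext \<Phi>)) k \<longleftrightarrow> bit (Vp S (suffix 1 \<pi>) \<Phi>) k"
  unfolding Vp.simps using bit_mono by (subst bit_mkB4) auto

lemma bit_Vp_REv:
  "k \<in> {1,2,3,4} \<Longrightarrow> bit (Vp S \<pi> (REv \<Phi>)) k \<longleftrightarrow> (\<exists>i. bit (Vp S (suffix i \<pi>) \<Phi>) k)"
  unfolding Vp.simps using bit_mono by (subst bit_mkB4) auto

lemma bit_Vp_RAlw: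
  fixes S \<pi> \<Phi> defines "b \<equiv> \<lambda>i. Vp S (suffix i \<pi>) \<Phi>"
  assumes "k \<in> {1,2,3,4}"
  shows "bit (Vp S \<pi> (RAlw \<Phi>)) k \<longleftrightarrow>
    (if k = 1 then \<forall>i. bit (b i) k else if k = 2 then \<exists>i. \<forall>j\<ge>i. bit (b j) k
     else if k = 3 then \<forall>i. \<exists>j\<ge>i. bit (b j) k else \<exists>i. bit (b i) k)"
proof -
  have "(\<forall>i. bit (b i) 1) \<longrightarrow> (\<exists>i. \<forall>j\<ge>i. bit (b j) 2)" using bit_mono by blast
  moreover have "(\<exists>i. \<forall>j\<ge>i. bit (b j) 2) \<longrightarrow> (\<forall>i. \<exists>j\<ge>i. bit (b j) 3)"
    using bit_mono by (metis max.cobounded1 max.cobounded2)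
  moreover have "(\<forall>i. \<exists>j\<ge>i. bit (b j) 3) \<longrightarrow> (\<exists>i. bit (b i) 4)" using bit_mono by blast
  ultimately show ?thesis
    unfolding b_def Vp.simps using assms by (subst bit_mkB4) auto
qed

definition aand :: "('p, 'ag) astate \<Rightarrow> ('p, 'ag) astate \<Rightarrow> ('p, 'ag) astate" where
  "aand \<phi> \<psi> = ANeg (AOr (ANeg \<phi>) (ANeg \<psi>))"

definition aimp :: "('p, 'ag) astate \<Rightarrow> ('p, 'ag) astate \<Rightarrow> ('p, 'ag) astate" where
  "aimp \<phi> \<psi> = AOr (ANeg \<phi>) \<psi>"

definition atrue :: "('p, 'ag) astate" where
  "atrue = AOr (AProp undefined) (ANeg (AProp undefined))"

definition apand :: "('p, 'ag) apath \<Rightarrow> ('p, 'ag) apath \<Rightarrow> ('p, 'ag) apath" where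
  "apand \<Phi> \<Psi> = APNeg (APOr (APNeg \<Phi>) (APNeg \<Psi>))"

definition apimp :: "('p, 'ag) apath \<Rightarrow> ('p, 'ag) apath \<Rightarrow> ('p, 'ag) apath" where
  "apimp \<Phi> \<Psi> = APOr (APNeg \<Phi>) \<Psi>"

lemma sat_derived [simp]:
  "sat_s S s (aand \<phi> \<psi>) \<longleftrightarrow> sat_s S s \<phi> \<and> sat_s S s \<psi>"
  "sat_s S s (aimp \<phi> \<psi>) \<longleftrightarrow> (sat_s S s \<phi> \<longrightarrow> sat_s S s \<psi>)"
  "sat_s S s atrue"
  "sat_p S \<pi> (apand \<Phi> \<Psi>) \<longleftrightarrow> sat_p S \<pi> \<Phi> \<and> sat_p S \<pi> \<Psi>"
  "sat_p S \<pi> (apimp \<Phi> \<Psi>) \<longleftrightarrow> (sat_p S \<pi> \<Phi> \<longrightarrow> sat_p S \<pi> \<Psi>)"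
  by (auto simp: aand_def aimp_def atrue_def apand_def apimp_def)

primrec atl_bit_s :: "('p, 'ag) rstate \<Rightarrow> nat \<Rightarrow> ('p, 'ag) astate"
  and atl_bit_p :: "('p, 'ag) rpath \<Rightarrow> nat \<Rightarrow> ('p, 'ag) apath" where
  "atl_bit_s (RProp p) k = AProp p"
| "atl_bit_s (RNeg \<phi>) k = ANeg (atl_bit_s \<phi> 1)"
| "atl_bit_s (ROr \<phi> \<psi>) k = AOr (atl_bit_s \<phi> k) (atl_bit_s \<psi> k)"
| "atl_bit_s (RAnd \<phi> \<psi>) k = aand (atl_bit_s \<phi> k) (atl_bit_s \<psi> k)"
| "atl_bit_s (RImp \<phi> \<psi>) k =
     AOr (aand (aimp (atl_bit_s \<phi> 1) (atl_bit_s \<psi> 1)) (aand (aimp (atl_bit_s \<phi> 2) (atl_bit_s \<psi> 2))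
       (aand (aimp (atl_bit_s \<phi> 3) (atl_bit_s \<psi> 3)) (aimp (atl_bit_s \<phi> 4) (atl_bit_s \<psi> 4)))))
     (atl_bit_s \<psi> k)"
| "atl_bit_s (RExists A \<Phi>) k = AExists A (atl_bit_p \<Phi> k)"
| "atl_bit_s (RForall A \<Phi>) k = AForall A (atl_bit_p \<Phi> k)"
| "atl_bit_p (RState \<phi>) k = AState (atl_bit_s \<phi> k)"
| "atl_bit_p (RPNeg \<Phi>) k = APNeg (atl_bit_p \<Phi> 1)"
| "atl_bit_p (RPOr \<Phi> \<Psi>) k = APOr (atl_bit_p \<Phi> k) (atl_bit_p \<Psi> k)"
| "atl_bit_p (RPAnd \<Phi> \<Psi>) k = apand (atl_bit_p \<Phi> k) (atl_bit_p \<Psi> k)"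
| "atl_bit_p (RPImp \<Phi> \<Psi>) k =
     APOr (apand (apimp (atl_bit_p \<Phi> 1) (atl_bit_p \<Psi> 1)) (apand (apimp (atl_bit_p \<Phi> 2) (atl_bit_p \<Psi> 2))
       (apand (apimp (atl_bit_p \<Phi> 3) (atl_bit_p \<Psi> 3)) (apimp (atl_bit_p \<Phi> 4) (atl_bit_p \<Psi> 4)))))
     (atl_bit_p \<Psi> k)"
| "atl_bit_p (RNext \<Phi>) k = ANext (atl_bit_p \<Phi> k)"
| "atl_bit_p (REv \<Phi>) k = AEv (atl_bit_p \<Phi> k)"
| "atl_bit_p (RAlw \<Phi>) k =
     (if k = 1 then AAlw (atl_bit_p \<Phi> 1) else if k = 2 then AEv (AAlw (atl_bit_p \<Phi> 2))
      else if k = 3 then AAlw (AEv (atl_bit_p \<Phi> 3)) else AEv (atl_bit_p \<Phi> 4))"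

lemma sat_atl_bit:
  assumes "Ac S \<noteq> {}"
  shows "\<forall>s k. k \<in> {1,2,3,4} \<longrightarrow> (sat_s S s (atl_bit_s \<phi> k) \<longleftrightarrow> bit (Vs S s \<phi>) k)"
    and "\<forall>\<pi> k. k \<in> {1,2,3,4} \<longrightarrow> (sat_p S \<pi> (atl_bit_p \<Phi> k) \<longleftrightarrow> bit (Vp S \<pi> \<Phi>) k)"
proof (induction \<phi> and \<Phi>)
  case (RExists A \<Phi>)
  then show ?case by (simp add: bit_Vs_RExists[OF assms] del: Vs.simps)
next
  case (RForall A \<Phi>)
  then show ?case by (simp add: bit_Vs_RForall[OF assms] del: Vs.simps)
next
  case (RNext \<Phi>)
  then show ?case by (simp add: bit_Vp_RNext del: Vp.simps)
next
  case (REv \<Phi>)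
  then show ?case by (simp add: bit_Vp_REv del: Vp.simps)
next
  case (RAlw \<Phi>)
  then show ?case by (auto simp: bit_Vp_RAlw le_iff_add simp del: Vp.simps) blast+
qed (simp_all add: bit_negB4 bit_max bit_min bit_impB4)

definition atl_threshold :: "B4 \<Rightarrow> ('p, 'ag) rstate \<Rightarrow> ('p, 'ag) astate" where
  "atl_threshold t \<phi> = (case t of B0000 \<Rightarrow> atrue
     | B0001 \<Rightarrow> atl_bit_s \<phi> 4 | B0011 \<Rightarrow> atl_bit_s \<phi> 3 | B0111 \<Rightarrow> atl_bit_s \<phi> 2 | B1111 \<Rightarrow> atl_bit_s \<phi> 1)"

lemma sat_atl_threshold:
  assumes "Ac S \<noteq> {}"
  shows "sat_s S s (atl_threshold t \<phi>) \<longleftrightarrow> t \<le> Vs S s \<phi>"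
  using sat_atl_bit(1)[OF assms, of \<phi>] bit_iff_threshold_le[of _ "Vs S s \<phi>"]
  by (cases t) (auto simp: atl_threshold_def bit_threshold_def less_eq_B4_def)

primrec ratl_s :: "('p, 'ag) astate \<Rightarrow> ('p, 'ag) rstate"
  and ratl_p :: "('p, 'ag) apath \<Rightarrow> ('p, 'ag) rpath" where
  "ratl_s (AProp p) = RProp p"
| "ratl_s (ANeg \<phi>) = RNeg (ratl_s \<phi>)"
| "ratl_s (AOr \<phi> \<psi>) = ROr (ratl_s \<phi>) (ratl_s \<psi>)"
| "ratl_s (AExists A \<Phi>) = RExists A (ratl_p \<Phi>)"
| "ratl_s (AForall A \<Phi>) = RForall A (ratl_p \<Phi>)"
| "ratl_p (AState \<phi>) = RState (ratl_s \<phi>)"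
| "ratl_p (APNeg \<Phi>) = RPNeg (ratl_p \<Phi>)"
| "ratl_p (APOr \<Phi> \<Psi>) = RPOr (ratl_p \<Phi>) (ratl_p \<Psi>)"
| "ratl_p (ANext \<Phi>) = RNext (ratl_p \<Phi>)"
| "ratl_p (AEv \<Phi>) = REv (ratl_p \<Phi>)"
| "ratl_p (AAlw \<Phi>) = RAlw (ratl_p \<Phi>)"

lemma bit_1_ratl:
  assumes "Ac S \<noteq> {}"
  shows "\<forall>s. bit (Vs S s (ratl_s \<psi>)) 1 \<longleftrightarrow> sat_s S s \<psi>"
    and "\<forall>\<pi>. bit (Vp S \<pi> (ratl_p \<Psi>)) 1 \<longleftrightarrow> sat_p S \<pi> \<Psi>"
  by (induction \<psi> and \<Psi>)
     (simp_all add: bit_negB4 bit_max bit_Vs_RExists[OF assms] bit_Vs_RForall[OF assms]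
       bit_Vp_RNext bit_Vp_REv bit_Vp_RAlw del: Vs.simps(6,7) Vp.simps(6-8))

theorem corollary2:
  shows "(\<forall>(\<phi> :: ('p :: finite, 'ag :: finite) rstate). \<forall>t :: B4.
            \<exists>\<phi>t :: ('p, 'ag) astate. \<forall>S :: ('p, 'ag) cgs. is_cgs S \<longrightarrow>
              (\<forall>s \<in> St S. t \<le> Vs S s \<phi> \<longleftrightarrow> sat_s S s \<phi>t))
       \<and> (\<forall>(\<psi> :: ('p, 'ag) astate).
            \<exists>\<psi>s :: ('p, 'ag) rstate. \<forall>S :: ('p, 'ag) cgs. is_cgs S \<longrightarrow>
              (\<forall>s \<in> St S. sat_s S s \<psi> \<longleftrightarrow> Vs S s \<psi>s = B1111))"
proof (intro conjI allI)
  fix \<phi> :: "('p, 'ag) rstate" and t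
  show "\<exists>\<phi>t :: ('p, 'ag) astate. \<forall>S :: ('p, 'ag) cgs. is_cgs S \<longrightarrow>
          (\<forall>s \<in> St S. t \<le> Vs S s \<phi> \<longleftrightarrow> sat_s S s \<phi>t)"
    by (intro exI[of _ "atl_threshold t \<phi>"]) (simp add: is_cgs_def sat_atl_threshold)
next
  fix \<psi> :: "('p, 'ag) astate"
  show "\<exists>\<psi>s :: ('p, 'ag) rstate. \<forall>S :: ('p, 'ag) cgs. is_cgs S \<longrightarrow>
          (\<forall>s \<in> St S. sat_s S s \<psi> \<longleftrightarrow> Vs S s \<psi>s = B1111)"
    by (intro exI[of _ "ratl_s \<psi>"]) (metis is_cgs_def bit_1_ratl(1) bit_1_iff)
qed

end
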